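(* Let $\varepsilon>0$ and $r_c>0$, and let $\mathbf{X}=(x_1,x_2,x_3):(0,S)\times[0,T_* )\to\mathbb{R}^3$ be a smooth solution of $$\mathbf{X}_t = \frac{\mathbf{X}_s \wedge \mathbf{X}_{ss}}{|\mathbf{X}_s|^3} - \frac{\varepsilon\, x_1}{x_1^2 + r_c^2}\, \frac{\mathbf{X}_s\wedge \mathbf{e}_1 }{|\mathbf{X}_s|}$$ with $\mathbf{X}_s(s,t)\neq 0$ for all $(s,t)$. Then there is a function $L_0$ of $s$ alone (determined by the initial data) such that the modulus of the tangential vector $\mathbf{T}=\mathbf{X}_s$ satisfies $$|\mathbf{T}(s,t)| = L_0(s)\,\bigl(x_1^2(s,t) + r_c^2\bigr)^{-\varepsilon/2}\quad\text{for all }(s,t).$$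
   Context: $\mathbf{e}_1=(1,0,0)$, $\wedge$ denotes the cross product in $\mathbb{R}^3$, subscripts $s,t$ denote partial derivatives. The equation models a vortex filament $\mathbf{X}$ interacting with its mirror image in the plane $x_1=0$ (antiparallel vortex pair), with interaction strength $\varepsilon$ and regularization parameter $r_c$. *)

theory Defs
  imports "HOL-Analysis.Analysis"
begin

datatype pvar = Sv | Tv

fun dirv :: "pvar \<Rightarrow> real \<times> real" where
  "dirv Sv = (1, 0)"
| "dirv Tv = (0, 1)"

text \<open>Partial derivative of g in the coordinate direction v, relative to the domain U
  (one-sided at boundary points of U such as t = 0).\<close>
definition pd :: "(real \<times> real) set \<Rightarrow> pvar \<Rightarrow> (real \<times> real \<Rightarrow> 'a::real_normed_vector)
                   \<Rightarrow> real \<times> real \<Rightarrow> 'a" where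
  "pd U v g = (\<lambda>p. vector_derivative (\<lambda>h. g (p + h *\<^sub>R dirv v))
                       (at 0 within {h. p + h *\<^sub>R dirv v \<in> U}))"

fun iter_pd :: "(real \<times> real) set \<Rightarrow> pvar list \<Rightarrow> (real \<times> real \<Rightarrow> 'a::real_normed_vector)
                  \<Rightarrow> real \<times> real \<Rightarrow> 'a" where
  "iter_pd U [] g = g"
| "iter_pd U (v # vs) g = pd U v (iter_pd U vs g)"

definition smooth_on :: "(real \<times> real) set \<Rightarrow> (real \<times> real \<Rightarrow> 'a::real_normed_vector) \<Rightarrow> bool" where
  "smooth_on U g \<longleftrightarrow>
     (\<forall>vs. continuous_on U (iter_pd U vs g) \<and>
        (\<forall>v. \<forall>p\<in>U. ((\<lambda>h. iter_pd U vs g (p + h *\<^sub>R dirv v))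
                        has_vector_derivative pd U v (iter_pd U vs g) p)
                     (at 0 within {h. p + h *\<^sub>R dirv v \<in> U})))"

definition e1 :: "real^3" where "e1 = axis 1 1"

end

theory Submission imports Defs begin

(* Write T = X_s and x = X $ 1. Differentiating the equation in s and taking the inner product
   with T, the first term contributes nothing because T \<bullet> (T \<times> T_ss) = 0, and the second leaves
     d/dt |T|^2 / 2 = T \<bullet> (X_t)_s = - \<epsilon> x / ((x^2 + r_c^2) |T|) * (T \<times> T_s) $ 1,
   while the first component of the equation reads d/dt x = (T \<times> T_s) $ 1 / |T|^3. Together
   these say that |T|^2 (x^2 + r_c^2) powr \<epsilon> does not depend on t, and L_0 s is the square root
   of its value at t = 0. The exchange (X_s)_t = (X_t)_s comes from writing
   X(s,t) = X(s,0) + integral of X_t over [0,t] and differentiating under the integral sign. *)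

lemma has_vector_derivative_at_within_shift:
  fixes f :: "real \<Rightarrow> 'a::real_normed_vector"
  assumes "((\<lambda>h. f (a + h)) has_vector_derivative D) (at 0 within {h. a + h \<in> A})"
  shows "(f has_vector_derivative D) (at a within A)"
proof -
  have "(\<lambda>x. x - a) ` A = {h. a + h \<in> A}"
    by (auto simp: image_iff intro!: bexI[where x="a + _"])
  then have "(((\<lambda>h. f (a + h)) \<circ> (\<lambda>x. x - a)) has_vector_derivative 1 *\<^sub>R D) (at a within A)"
    using assms by (intro vector_diff_chain_within) (auto intro!: derivative_eq_intros)
  then show ?thesis by (simp add: o_def)
qed

lemma has_real_derivative_norm:
  fixes f :: "real \<Rightarrow> 'a::real_inner"
  assumes "(f has_vector_derivative f') (at x within S)" "f x \<noteq> 0"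
  shows "((\<lambda>x. norm (f x)) has_real_derivative (f x \<bullet> f') / norm (f x)) (at x within S)"
proof -
  have "((\<lambda>x. norm (f x)) has_derivative (\<lambda>h. h * (f' \<bullet> sgn (f x)))) (at x within S)"
    using has_derivative_compose[OF assms(1)[unfolded has_vector_derivative_def]
        has_derivative_norm[OF assms(2)]]
    by (simp add: o_def)
  then show ?thesis
    unfolding has_field_derivative_def
    by (rule has_derivative_eq_rhs) (auto simp: sgn_div_norm inner_commute fun_eq_iff field_simps)
qed

lemma iter_pd_append: "iter_pd U (vs @ ws) g = iter_pd U vs (iter_pd U ws g)"
  by (induction vs) simp_all

lemma smooth_on_pd:
  assumes "smooth_on U g"
  shows "smooth_on U (pd U v g)"
proof -
  have "iter_pd U vs (pd U v g) = iter_pd U (vs @ [v]) g" for vs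
    by (simp add: iter_pd_append)
  then show ?thesis
    using assms unfolding smooth_on_def by (simp only:) blast
qed

lemma smooth_on_imp_continuous_on: "smooth_on U g \<Longrightarrow> continuous_on U g"
  using iter_pd.simps(1) smooth_on_def by metis

lemma smooth_on_has_vector_derivative_Sv:
  assumes "smooth_on (J \<times> I) g" "\<sigma> \<in> J" "\<tau> \<in> I"
  shows "((\<lambda>\<sigma>. g (\<sigma>, \<tau>)) has_vector_derivative pd (J \<times> I) Sv g (\<sigma>, \<tau>)) (at \<sigma> within J)"
proof (rule has_vector_derivative_at_within_shift)
  have "((\<lambda>h. iter_pd (J \<times> I) [] g ((\<sigma>, \<tau>) + h *\<^sub>R dirv Sv)) has_vector_derivative
      pd (J \<times> I) Sv (iter_pd (J \<times> I) [] g) (\<sigma>, \<tau>))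
      (at 0 within {h. (\<sigma>, \<tau>) + h *\<^sub>R dirv Sv \<in> J \<times> I})"
    using assms unfolding smooth_on_def by blast
  then show "((\<lambda>h. g (\<sigma> + h, \<tau>)) has_vector_derivative pd (J \<times> I) Sv g (\<sigma>, \<tau>))
      (at 0 within {h. \<sigma> + h \<in> J})"
    using assms(3) by simp
qed

lemma smooth_on_has_vector_derivative_Tv:
  assumes "smooth_on (J \<times> I) g" "\<sigma> \<in> J" "\<tau> \<in> I"
  shows "((\<lambda>\<tau>. g (\<sigma>, \<tau>)) has_vector_derivative pd (J \<times> I) Tv g (\<sigma>, \<tau>)) (at \<tau> within I)"
proof (rule has_vector_derivative_at_within_shift)
  have "((\<lambda>h. iter_pd (J \<times> I) [] g ((\<sigma>, \<tau>) + h *\<^sub>R dirv Tv)) has_vector_derivative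
      pd (J \<times> I) Tv (iter_pd (J \<times> I) [] g) (\<sigma>, \<tau>))
      (at 0 within {h. (\<sigma>, \<tau>) + h *\<^sub>R dirv Tv \<in> J \<times> I})"
    using assms unfolding smooth_on_def by blast
  then show "((\<lambda>h. g (\<sigma>, \<tau> + h)) has_vector_derivative pd (J \<times> I) Tv g (\<sigma>, \<tau>))
      (at 0 within {h. \<tau> + h \<in> I})"
    using assms(2) by simp
qed

context
  fixes J :: "real set" and a b :: real and f fs ft fts :: "real \<times> real \<Rightarrow> 'a::banach"
  assumes J: "open J" "convex J"
    and fs: "\<And>\<sigma> \<tau>. \<sigma> \<in> J \<Longrightarrow> \<tau> \<in> {a..<b} \<Longrightarrow>
               ((\<lambda>\<sigma>. f (\<sigma>, \<tau>)) has_vector_derivative fs (\<sigma>, \<tau>)) (at \<sigma> within J)"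
    and ft: "\<And>\<sigma> \<tau>. \<sigma> \<in> J \<Longrightarrow> \<tau> \<in> {a..<b} \<Longrightarrow>
               ((\<lambda>\<tau>. f (\<sigma>, \<tau>)) has_vector_derivative ft (\<sigma>, \<tau>)) (at \<tau> within {a..<b})"
    and fts: "\<And>\<sigma> \<tau>. \<sigma> \<in> J \<Longrightarrow> \<tau> \<in> {a..<b} \<Longrightarrow>
               ((\<lambda>\<sigma>. ft (\<sigma>, \<tau>)) has_vector_derivative fts (\<sigma>, \<tau>)) (at \<sigma> within J)"
    and ft_cont: "continuous_on (J \<times> {a..<b}) ft"
    and fts_cont: "continuous_on (J \<times> {a..<b}) fts"
begin

lemma partial_integral_formula:
  assumes \<sigma>: "\<sigma> \<in> J" and \<tau>: "\<tau> \<in> {a..<b}"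
  shows "fs (\<sigma>, \<tau>) = fs (\<sigma>, a) + integral {a..\<tau>} (\<lambda>r. fts (\<sigma>, r))"
proof -
  have sub: "J \<times> {a..\<tau>} \<subseteq> J \<times> {a..<b}"
    using \<tau> by auto
  have ftc: "f (\<sigma>', \<tau>) = f (\<sigma>', a) + integral {a..\<tau>} (\<lambda>r. ft (\<sigma>', r))" if "\<sigma>' \<in> J" for \<sigma>'
  proof -
    have "((\<lambda>r. ft (\<sigma>', r)) has_integral f (\<sigma>', \<tau>) - f (\<sigma>', a)) {a..\<tau>}"
      using that \<tau>
      by (intro fundamental_theorem_of_calculus)
        (auto intro: has_vector_derivative_within_subset[OF ft])
    then show ?thesis by (simp add: integral_unique)
  qed
  have "((\<lambda>\<sigma>. integral (cbox a \<tau>) (\<lambda>r. ft (\<sigma>, r))) has_vector_derivative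
      integral (cbox a \<tau>) (\<lambda>r. fts (\<sigma>, r))) (at \<sigma> within J)"
  proof (rule leibniz_rule_vector_derivative[where f="\<lambda>\<sigma> r. ft (\<sigma>, r)", OF _ _ _ \<sigma> J(2)])
    show "((\<lambda>\<sigma>. ft (\<sigma>, r)) has_vector_derivative fts (\<sigma>, r)) (at \<sigma> within J)"
      if "\<sigma> \<in> J" "r \<in> cbox a \<tau>" for \<sigma> r
      using that \<tau> by (intro fts) auto
    show "(\<lambda>r. ft (\<sigma>', r)) integrable_on cbox a \<tau>" if "\<sigma>' \<in> J" for \<sigma>'
      unfolding cbox_interval using that \<tau>
      by (intro integrable_continuous_interval continuous_on_compose2[OF ft_cont] continuous_intros)
        auto
    show "continuous_on (J \<times> cbox a \<tau>) (\<lambda>(\<sigma>, r). fts (\<sigma>, r))"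
      using continuous_on_subset[OF fts_cont sub] by simp
  qed
  then have "((\<lambda>\<sigma>. f (\<sigma>, a) + integral {a..\<tau>} (\<lambda>r. ft (\<sigma>, r))) has_vector_derivative
      fs (\<sigma>, a) + integral {a..\<tau>} (\<lambda>r. fts (\<sigma>, r))) (at \<sigma> within J)"
    using fs[OF \<sigma>] \<tau> by (intro has_vector_derivative_add) auto
  then have "((\<lambda>\<sigma>. f (\<sigma>, \<tau>)) has_vector_derivative
      fs (\<sigma>, a) + integral {a..\<tau>} (\<lambda>r. fts (\<sigma>, r))) (at \<sigma> within J)"
    by (rule has_vector_derivative_transform[rotated 2]) (simp_all add: \<sigma> ftc)
  moreover have "at \<sigma> within J \<noteq> bot"
    by (simp add: at_within_open[OF \<sigma> J(1)])
  ultimately show ?thesis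
    by (intro vector_derivative_unique_within[OF _ fs[OF \<sigma> \<tau>]])
qed

lemma has_vector_derivative_mixed_partial:
  assumes \<sigma>: "\<sigma> \<in> J" and \<tau>: "\<tau> \<in> {a..<b}"
  shows "((\<lambda>\<tau>. fs (\<sigma>, \<tau>)) has_vector_derivative fts (\<sigma>, \<tau>)) (at \<tau> within {a..<b})"
proof -
  define c where "c = (\<tau> + b) / 2"
  have c: "a \<le> \<tau>" "\<tau> < c" "c < b"
    using \<tau> by (auto simp: c_def)
  have "continuous_on {a..c} (\<lambda>r. fts (\<sigma>, r))"
    using \<sigma> c by (intro continuous_on_compose2[OF fts_cont] continuous_intros) auto
  then have "((\<lambda>\<tau>. fs (\<sigma>, a) + integral {a..\<tau>} (\<lambda>r. fts (\<sigma>, r))) has_vector_derivative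
      fts (\<sigma>, \<tau>)) (at \<tau> within {a..c})"
    using has_vector_derivative_add[OF has_vector_derivative_const
        integral_has_vector_derivative[of a c _ \<tau>]] c by simp
  then have "((\<lambda>\<tau>. fs (\<sigma>, \<tau>)) has_vector_derivative fts (\<sigma>, \<tau>)) (at \<tau> within {a..c})"
    by (rule has_vector_derivative_transform[rotated 2])
      (use \<sigma> c in \<open>auto intro: partial_integral_formula\<close>)
  moreover have "at \<tau> within {a..c} = at \<tau> within {a..<b}"
    by (rule at_within_nhd[of \<tau> "{..<c}"]) (use c in auto)
  ultimately show ?thesis by simp
qed

end

lemma bounded_bilinear_cross3: "bounded_bilinear cross3"
  using bilinear_conv_bounded_bilinear bilinear_cross by blast

lemma inner_cross3_e1: "a \<bullet> cross3 b e1 = cross3 a b $ 1"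
  by (simp add: e1_def cross3_simps axis_def)

lemma binormal_field_has_vector_derivative:
  fixes u v :: "real \<Rightarrow> real^3" and \<alpha> \<beta> :: "real \<Rightarrow> real"
  assumes u: "(u has_vector_derivative v x) (at x within S)"
    and v: "(v has_vector_derivative v') (at x within S)"
    and \<alpha>: "(\<alpha> has_real_derivative \<alpha>') (at x within S)"
    and \<beta>: "(\<beta> has_real_derivative \<beta>') (at x within S)"
  obtains D
  where "((\<lambda>y. \<alpha> y *\<^sub>R cross3 (u y) (v y) - \<beta> y *\<^sub>R cross3 (u y) e1)
           has_vector_derivative D) (at x within S)"
    and "u x \<bullet> D = - \<beta> x * cross3 (u x) (v x) $ 1"
proof
  let ?D = "(\<alpha> x *\<^sub>R (cross3 (u x) v' + cross3 (v x) (v x)) + \<alpha>' *\<^sub>R cross3 (u x) (v x))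
            - (\<beta> x *\<^sub>R (cross3 (u x) 0 + cross3 (v x) e1) + \<beta>' *\<^sub>R cross3 (u x) e1)"
  show "((\<lambda>y. \<alpha> y *\<^sub>R cross3 (u y) (v y) - \<beta> y *\<^sub>R cross3 (u y) e1)
           has_vector_derivative ?D) (at x within S)"
    by (intro has_vector_derivative_diff has_vector_derivative_scaleR \<alpha> \<beta> u v
        bounded_bilinear.has_vector_derivative[OF bounded_bilinear_cross3]
        has_vector_derivative_const)
  show "u x \<bullet> ?D = - \<beta> x * cross3 (u x) (v x) $ 1"
    by (simp add: inner_diff_right inner_add_right dot_cross_self inner_cross3_e1)
qed

lemma nonneg_eq_sqrt_mult_powr:
  fixes n g c e :: real
  assumes "n \<ge> 0" "g > 0" "n\<^sup>2 * g powr e = c"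
  shows "n = sqrt c * g powr (- e / 2)"
proof -
  have "n\<^sup>2 = c * g powr (- e)"
    using assms(2,3) by (auto simp: powr_minus field_simps)
  then have "n = sqrt (c * g powr (- e))"
    using assms(1) by (metis real_sqrt_abs abs_of_nonneg)
  also have "\<dots> = sqrt c * g powr (- e / 2)"
    using assms(2) powr_half_sqrt_powr[of g "- e"] by (simp add: real_sqrt_mult)
  finally show ?thesis .
qed

locale vortex_filament_flow =
  fixes \<epsilon> r\<^sub>c S T :: real and X :: "real \<times> real \<Rightarrow> real^3" and U :: "(real \<times> real) set"
  assumes U_eq: "U = {0<..<S} \<times> {0..<T}"
    and rc_pos: "r\<^sub>c > 0"
    and smooth: "smooth_on U X"
    and tangent_nonzero: "\<forall>p\<in>U. pd U Sv X p \<noteq> 0"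
    and motion_law: "\<forall>p\<in>U.
        pd U Tv X p =
          (1 / norm (pd U Sv X p) ^ 3) *\<^sub>R (cross3 (pd U Sv X p) (pd U Sv (pd U Sv X) p))
          - (\<epsilon> * (X p $ 1) / ((X p $ 1)\<^sup>2 + r\<^sub>c\<^sup>2) / norm (pd U Sv X p))
              *\<^sub>R (cross3 (pd U Sv X p) e1)"
begin

abbreviation "Xs \<equiv> pd U Sv X"
abbreviation "Xt \<equiv> pd U Tv X"

lemma mem_U: "(s, t) \<in> U \<longleftrightarrow> s \<in> {0<..<S} \<and> t \<in> {0..<T}"
  by (simp add: U_eq)

lemma square_plus_rc_pos: "0 < x\<^sup>2 + r\<^sub>c\<^sup>2"
  using rc_pos by (simp add: add_nonneg_pos)

lemma has_vector_derivative_Sv: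
  assumes "smooth_on U g" "(s, t) \<in> U"
  shows "((\<lambda>\<sigma>. g (\<sigma>, t)) has_vector_derivative pd U Sv g (s, t)) (at s within {0<..<S})"
  using assms smooth_on_has_vector_derivative_Sv unfolding U_eq by blast

lemma has_vector_derivative_Tv:
  assumes "smooth_on U g" "(s, t) \<in> U"
  shows "((\<lambda>\<tau>. g (s, \<tau>)) has_vector_derivative pd U Tv g (s, t)) (at t within {0..<T})"
  using assms smooth_on_has_vector_derivative_Tv unfolding U_eq by blast

lemma tangent_has_vector_derivative_Tv:
  assumes "(s, t) \<in> U"
  shows "((\<lambda>\<tau>. Xs (s, \<tau>)) has_vector_derivative pd U Sv Xt (s, t)) (at t within {0..<T})"
proof (rule has_vector_derivative_mixed_partial[where f = X])
  show "continuous_on ({0<..<S} \<times> {0..<T}) Xt" "continuous_on ({0<..<S} \<times> {0..<T}) (pd U Sv Xt)"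
    using smooth by (simp_all flip: U_eq add: smooth_on_imp_continuous_on smooth_on_pd)
qed (use assms smooth in \<open>auto simp: mem_U
  intro: has_vector_derivative_Sv has_vector_derivative_Tv smooth_on_pd\<close>)

lemma inner_tangent_velocity_Sv:
  assumes st: "(s, t) \<in> U"
  shows "Xs (s, t) \<bullet> pd U Sv Xt (s, t) =
    - (\<epsilon> * (X (s, t) $ 1) / ((X (s, t) $ 1)\<^sup>2 + r\<^sub>c\<^sup>2) / norm (Xs (s, t)))
      * cross3 (Xs (s, t)) (pd U Sv Xs (s, t)) $ 1"
proof -
  define \<alpha> where "\<alpha> \<sigma> = 1 / norm (Xs (\<sigma>, t)) ^ 3" for \<sigma>
  define \<beta> where "\<beta> \<sigma> = \<epsilon> * (X (\<sigma>, t) $ 1) / ((X (\<sigma>, t) $ 1)\<^sup>2 + r\<^sub>c\<^sup>2) / norm (Xs (\<sigma>, t))"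
    for \<sigma>
  have s: "s \<in> {0<..<S}" and t: "t \<in> {0..<T}"
    using st by (simp_all add: mem_U)
  have nz: "Xs (s, t) \<noteq> 0"
    using tangent_nonzero st by blast
  note dX = has_vector_derivative_Sv[OF smooth st]
  note dXs = has_vector_derivative_Sv[OF smooth_on_pd[OF smooth] st]
  note dXss = has_vector_derivative_Sv[OF smooth_on_pd[OF smooth_on_pd[OF smooth]] st]
  note dnorm = has_real_derivative_norm[OF dXs nz]
  have dx1: "((\<lambda>\<sigma>. X (\<sigma>, t) $ 1) has_real_derivative Xs (s, t) $ 1) (at s within {0<..<S})"
    using bounded_linear.has_vector_derivative[OF bounded_linear_vec_nth dX]
    by (simp add: has_real_derivative_iff_has_vector_derivative)
  have "\<exists>\<alpha>'. (\<alpha> has_real_derivative \<alpha>') (at s within {0<..<S})"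
    unfolding \<alpha>_def
    by (rule exI, rule DERIV_divide[OF DERIV_const DERIV_power[OF dnorm]]) (use nz in simp)
  then obtain \<alpha>' where d\<alpha>: "(\<alpha> has_real_derivative \<alpha>') (at s within {0<..<S})" ..
  have "\<exists>\<beta>'. (\<beta> has_real_derivative \<beta>') (at s within {0<..<S})"
    unfolding \<beta>_def
    by (rule exI, rule DERIV_divide[OF DERIV_divide[OF DERIV_cmult[OF dx1]
          DERIV_add[OF DERIV_power[OF dx1] DERIV_const]] dnorm]) (use nz rc_pos in simp_all)
  then obtain \<beta>' where d\<beta>: "(\<beta> has_real_derivative \<beta>') (at s within {0<..<S})" ..
  obtain D
    where dV: "((\<lambda>\<sigma>. \<alpha> \<sigma> *\<^sub>R cross3 (Xs (\<sigma>, t)) (pd U Sv Xs (\<sigma>, t))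
                  - \<beta> \<sigma> *\<^sub>R cross3 (Xs (\<sigma>, t)) e1) has_vector_derivative D) (at s within {0<..<S})"
      and inner_D: "Xs (s, t) \<bullet> D = - \<beta> s * cross3 (Xs (s, t)) (pd U Sv Xs (s, t)) $ 1"
    using binormal_field_has_vector_derivative[OF dXs dXss d\<alpha> d\<beta>] .
  have "((\<lambda>\<sigma>. Xt (\<sigma>, t)) has_vector_derivative D) (at s within {0<..<S})"
    by (rule has_vector_derivative_transform[OF s _ dV])
      (use motion_law t in \<open>simp add: mem_U \<alpha>_def \<beta>_def\<close>)
  moreover have "at s within {0<..<S} \<noteq> bot"
    by (simp add: at_within_open[OF s])
  ultimately have "pd U Sv Xt (s, t) = D"
    using has_vector_derivative_Sv[OF smooth_on_pd[OF smooth] st]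
    by (intro vector_derivative_unique_within)
  then show ?thesis
    using inner_D by (simp add: \<beta>_def)
qed

lemma first_coordinate_has_derivative_Tv:
  assumes st: "(s, t) \<in> U"
  shows "((\<lambda>\<tau>. X (s, \<tau>) $ 1) has_real_derivative
           cross3 (Xs (s, t)) (pd U Sv Xs (s, t)) $ 1 / norm (Xs (s, t)) ^ 3) (at t within {0..<T})"
proof -
  have "Xt (s, t) $ 1 = cross3 (Xs (s, t)) (pd U Sv Xs (s, t)) $ 1 / norm (Xs (s, t)) ^ 3"
    using motion_law st by (simp add: cross3_def e1_def axis_def)
  moreover have "((\<lambda>\<tau>. X (s, \<tau>) $ 1) has_vector_derivative Xt (s, t) $ 1) (at t within {0..<T})"
    by (rule bounded_linear.has_vector_derivative[OF bounded_linear_vec_nth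
          has_vector_derivative_Tv[OF smooth st]])
  ultimately show ?thesis
    by (simp add: has_real_derivative_iff_has_vector_derivative)
qed

definition tangent_invariant :: "real \<times> real \<Rightarrow> real" where
  "tangent_invariant p = (Xs p \<bullet> Xs p) * ((X p $ 1)\<^sup>2 + r\<^sub>c\<^sup>2) powr \<epsilon>"

lemma tangent_invariant_has_derivative_Tv:
  assumes st: "(s, t) \<in> U"
  shows "((\<lambda>\<tau>. tangent_invariant (s, \<tau>)) has_real_derivative 0) (at t within {0..<T})"
proof -
  define A where "A = Xs (s, t)"
  define P where "P = cross3 A (pd U Sv Xs (s, t)) $ 1"
  define x where "x = X (s, t) $ 1"
  define g where "g = x\<^sup>2 + r\<^sub>c\<^sup>2"
  have g: "g > 0"
    by (simp add: g_def square_plus_rc_pos)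
  have nA: "norm A \<noteq> 0"
    using tangent_nonzero st by (simp add: A_def)
  have d_inner: "((\<lambda>\<tau>. Xs (s, \<tau>) \<bullet> Xs (s, \<tau>)) has_real_derivative
      2 * (A \<bullet> pd U Sv Xt (s, t))) (at t within {0..<T})"
    using bounded_bilinear.has_vector_derivative[OF bounded_bilinear_inner
        tangent_has_vector_derivative_Tv[OF st] tangent_has_vector_derivative_Tv[OF st]]
    by (simp add: has_real_derivative_iff_has_vector_derivative A_def inner_commute)
  have "((\<lambda>\<tau>. (X (s, \<tau>) $ 1)\<^sup>2 + r\<^sub>c\<^sup>2) has_real_derivative 2 * x * P / norm A ^ 3)
      (at t within {0..<T})"
    using DERIV_add[OF DERIV_power[OF first_coordinate_has_derivative_Tv[OF st], of 2]
        DERIV_const[of "r\<^sub>c\<^sup>2"]]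
    by (simp add: x_def P_def A_def mult_ac)
  from DERIV_chain'[OF this has_real_derivative_powr[of _ \<epsilon>]]
  have d_weight: "((\<lambda>\<tau>. ((X (s, \<tau>) $ 1)\<^sup>2 + r\<^sub>c\<^sup>2) powr \<epsilon>) has_real_derivative
      \<epsilon> * g powr (\<epsilon> - 1) * (2 * x * P / norm A ^ 3)) (at t within {0..<T})"
    using g by (simp add: g_def x_def)
  have "2 * (A \<bullet> pd U Sv Xt (s, t)) * g powr \<epsilon>
        + \<epsilon> * g powr (\<epsilon> - 1) * (2 * x * P / norm A ^ 3) * (A \<bullet> A) = 0"
  proof -
    have velocity: "A \<bullet> pd U Sv Xt (s, t) = - (\<epsilon> * x / g / norm A) * P"
      using inner_tangent_velocity_Sv[OF st] by (simp add: A_def P_def x_def g_def)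
    have "g powr \<epsilon> = g powr (\<epsilon> - 1) * g"
      using g powr_add[of g "\<epsilon> - 1" 1] by simp
    then show ?thesis
      unfolding velocity power2_norm_eq_inner[symmetric]
      using nA g by (simp add: field_simps power2_eq_square power3_eq_cube)
  qed
  with DERIV_mult[OF d_inner d_weight] show ?thesis
    by (simp add: tangent_invariant_def A_def x_def g_def)
qed

lemma tangent_invariant_eq_initial:
  assumes "(s, t) \<in> U"
  shows "tangent_invariant (s, t) = tangent_invariant (s, 0)"
proof -
  have "((\<lambda>\<tau>. tangent_invariant (s, \<tau>)) has_real_derivative 0) (at \<tau> within {0..<T})"
    if "\<tau> \<in> {0..<T}" for \<tau>
    using assms that by (intro tangent_invariant_has_derivative_Tv) (simp add: mem_U)
  from has_field_derivative_zero_constant[OF convex_real_interval(7) this]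
  obtain c where "\<forall>\<tau>\<in>{0..<T}. tangent_invariant (s, \<tau>) = c"
    by blast
  then show ?thesis
    using assms by (simp add: mem_U)
qed

end

theorem mainTheorem1:
  fixes \<epsilon> r\<^sub>c S Tstar :: real
    and X :: "real \<times> real \<Rightarrow> real^3"
  defines "U \<equiv> {0<..<S} \<times> {0..<Tstar}"
  assumes eps_pos: "\<epsilon> > 0" and rc_pos: "r\<^sub>c > 0"
    and smooth: "smooth_on U X"
    and nonzero: "\<forall>p\<in>U. pd U Sv X p \<noteq> 0"
    and eqn: "\<forall>p\<in>U.
        pd U Tv X p =
          (1 / norm (pd U Sv X p) ^ 3) *\<^sub>R (cross3 (pd U Sv X p) (pd U Sv (pd U Sv X) p))
          - (\<epsilon> * (X p $ 1) / ((X p $ 1)\<^sup>2 + r\<^sub>c\<^sup>2) / norm (pd U Sv X p))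
              *\<^sub>R (cross3 (pd U Sv X p) e1)"
  shows "\<exists>L\<^sub>0 :: real \<Rightarrow> real. \<forall>s t. (s, t) \<in> U \<longrightarrow>
           norm (pd U Sv X (s, t)) = L\<^sub>0 s * ((X (s, t) $ 1)\<^sup>2 + r\<^sub>c\<^sup>2) powr (- \<epsilon> / 2)"
proof -
  \<comment> \<open>The conservation law holds for every real \<epsilon>.\<close>
  interpret vortex_filament_flow \<epsilon> r\<^sub>c S Tstar X U
    using rc_pos smooth nonzero eqn by unfold_locales (simp_all add: U_def)
  show ?thesis
  proof (intro exI[of _ "\<lambda>s. sqrt (tangent_invariant (s, 0))"] allI impI)
    fix s t
    assume "(s, t) \<in> U"
    then have "tangent_invariant (s, t) = tangent_invariant (s, 0)"
      by (rule tangent_invariant_eq_initial)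
    then have "(norm (pd U Sv X (s, t)))\<^sup>2 * ((X (s, t) $ 1)\<^sup>2 + r\<^sub>c\<^sup>2) powr \<epsilon>
        = tangent_invariant (s, 0)"
      by (simp add: tangent_invariant_def power2_norm_eq_inner)
    then show "norm (pd U Sv X (s, t)) =
        sqrt (tangent_invariant (s, 0)) * ((X (s, t) $ 1)\<^sup>2 + r\<^sub>c\<^sup>2) powr (- \<epsilon> / 2)"
      by (intro nonneg_eq_sqrt_mult_powr norm_ge_zero square_plus_rc_pos)
  qed
qed

end
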